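(* Let $\mathbb{V}$ be a vector space of dimension $n\geq 3$ over a finite field $\mathbb{F}$, with a fixed basis $\mathcal{B}=\{v_1,\dots,v_n\}$, and let $\mathbb{IG}(\mathbb{V})$ be its nonzero component graph with respect to $\mathcal{B}$. Then $\operatorname{sdim}_M(\mathbb{IG}(\mathbb{V}))=|V(\mathbb{IG}(\mathbb{V}))|-2^{n-1}$.
   Context: For $a=a_1v_1+\dots+a_nv_n\in\mathbb{V}$, its skeleton is $S_{\mathcal{B}}(a)=\{v_i: a_i\neq 0\}$. The nonzero component graph $\mathbb{IG}(\mathbb{V})$ has vertex set $\mathbb{V}\setminus\{0\}$, distinct $a,b$ adjacent iff $S_{\mathcal{B}}(a)\cap S_{\mathcal{B}}(b)\neq\emptyset$. For a connected graph $G$, a vertex $w$ strongly resolves $u,v$ if some shortest $u$–$w$ path contains $v$ or some shortest $v$–$w$ path contains $u$; $\operatorname{sdim}_M(G)$ is the minimum size of a set $W$ such that every pair of distinct vertices is strongly resolved by some vertex of $W$. *)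

theory Defs
  imports Main
begin

definition gwalk :: "'v set \<Rightarrow> ('v \<Rightarrow> 'v \<Rightarrow> bool) \<Rightarrow> 'v list \<Rightarrow> bool" where
  "gwalk V E xs \<longleftrightarrow> xs \<noteq> [] \<and> set xs \<subseteq> V \<and>
     (\<forall>i. i + 1 < length xs \<longrightarrow> E (xs ! i) (xs ! (i + 1)))"

definition gdist :: "'v set \<Rightarrow> ('v \<Rightarrow> 'v \<Rightarrow> bool) \<Rightarrow> 'v \<Rightarrow> 'v \<Rightarrow> nat" where
  "gdist V E u v = (LEAST k. \<exists>xs. gwalk V E xs \<and> hd xs = u \<and> last xs = v \<and> length xs = k + 1)"

definition shortest_path :: "'v set \<Rightarrow> ('v \<Rightarrow> 'v \<Rightarrow> bool) \<Rightarrow> 'v \<Rightarrow> 'v \<Rightarrow> 'v list \<Rightarrow> bool" where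
  "shortest_path V E u v xs \<longleftrightarrow> gwalk V E xs \<and> hd xs = u \<and> last xs = v \<and>
     length xs = gdist V E u v + 1"

definition connected_graph :: "'v set \<Rightarrow> ('v \<Rightarrow> 'v \<Rightarrow> bool) \<Rightarrow> bool" where
  "connected_graph V E \<longleftrightarrow> V \<noteq> {} \<and>
     (\<forall>u\<in>V. \<forall>v\<in>V. \<exists>xs. gwalk V E xs \<and> hd xs = u \<and> last xs = v)"

definition strongly_resolves :: "'v set \<Rightarrow> ('v \<Rightarrow> 'v \<Rightarrow> bool) \<Rightarrow> 'v \<Rightarrow> 'v \<Rightarrow> 'v \<Rightarrow> bool" where
  "strongly_resolves V E w u v \<longleftrightarrow>
     (\<exists>p. shortest_path V E u w p \<and> v \<in> set p) \<or> (\<exists>p. shortest_path V E v w p \<and> u \<in> set p)"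

definition strong_resolving_set :: "'v set \<Rightarrow> ('v \<Rightarrow> 'v \<Rightarrow> bool) \<Rightarrow> 'v set \<Rightarrow> bool" where
  "strong_resolving_set V E W \<longleftrightarrow> W \<subseteq> V \<and>
     (\<forall>u\<in>V. \<forall>v\<in>V. u \<noteq> v \<longrightarrow> (\<exists>w\<in>W. strongly_resolves V E w u v))"

definition sdim :: "'v set \<Rightarrow> ('v \<Rightarrow> 'v \<Rightarrow> bool) \<Rightarrow> nat" where
  "sdim V E = Inf {card W | W. finite W \<and> strong_resolving_set V E W}"

text \<open>A vector of an n-dimensional space over F is identified with its coordinate
  vector a = (a_0,...,a_{n-1}) w.r.t. the fixed basis, i.e. a function nat => F
  vanishing outside {0..<n}.\<close>
definition coord_space :: "nat \<Rightarrow> (nat \<Rightarrow> 'a::zero) set" where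
  "coord_space n = {a. \<forall>i. n \<le> i \<longrightarrow> a i = 0}"

definition skeleton :: "(nat \<Rightarrow> 'a::zero) \<Rightarrow> nat set" where
  "skeleton a = {i. a i \<noteq> 0}"

definition IG_vertices :: "nat \<Rightarrow> (nat \<Rightarrow> 'a::zero) set" where
  "IG_vertices n = coord_space n - {\<lambda>_. 0}"

definition IG_adj :: "(nat \<Rightarrow> 'a::zero) \<Rightarrow> (nat \<Rightarrow> 'a) \<Rightarrow> bool" where
  "IG_adj a b \<longleftrightarrow> a \<noteq> b \<and> skeleton a \<inter> skeleton b \<noteq> {}"

end

theory Submission
  imports Defs "HOL-Library.Indicator_Function"
begin

text \<open>The all-ones vector is adjacent to every other vertex, so the graph has diameter at most 2.
  In such a graph a vertex w different from x and y strongly resolves x and y only if, say,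
  x, y, w is a shortest path, i.e. x and y are adjacent and w is adjacent to y but not to x.
  In the nonzero component graph this means that the skeletons of x and y intersect and differ.
  Hence the vertices outside a strong resolving set have distinct, pairwise intersecting
  skeletons, and an intersecting family of subsets of an n-set has at most 2^(n-1) members.
  Conversely, the complement of the 2^(n-1) indicator vectors of sets containing the first
  coordinate is strongly resolving: two such vectors 1_S and 1_T with i in T - S are resolved
  by the unit vector e_i, since 1_S, 1_T, e_i is a shortest path.\<close>

lemma gwalk_Nil [simp]: "\<not> gwalk V E []"
  by (simp add: gwalk_def)

lemma gwalk_singleton [simp]: "gwalk V E [x] \<longleftrightarrow> x \<in> V"
  by (simp add: gwalk_def)

lemma gwalk_Cons_Cons [simp]:
  "gwalk V E (x # y # xs) \<longleftrightarrow> x \<in> V \<and> E x y \<and> gwalk V E (y # xs)"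
proof -
  have shift: "(\<forall>i. i + 1 < Suc k \<longrightarrow> P i) \<longleftrightarrow> P 0 \<and> (\<forall>i. i + 1 < k \<longrightarrow> P (Suc i))"
    if "k > 0" for k and P :: "nat \<Rightarrow> bool"
    using that by (metis Suc_eq_plus1 add_less_cancel_right not0_implies_Suc)
  show ?thesis
    unfolding gwalk_def using shift[of "Suc (length xs)"] by auto
qed

lemma gwalk_hd_last_in:
  assumes "gwalk V E xs"
  shows "hd xs \<in> V" "last xs \<in> V"
  using assms by (auto simp: gwalk_def)

lemma shortest_path_length_le:
  assumes "shortest_path V E u v p" "gwalk V E xs" "hd xs = u" "last xs = v"
  shows "length p \<le> length xs"
proof -
  have "length xs \<ge> 1" using assms(2) by (cases xs) auto
  moreover have "gdist V E u v \<le> length xs - 1"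
    unfolding gdist_def using assms(2-4) calculation by (intro Least_le exI[of _ xs]) auto
  ultimately show ?thesis using assms(1) by (simp add: shortest_path_def)
qed

lemma shortest_path_exists:
  assumes "gwalk V E xs" "hd xs = u" "last xs = v"
  obtains p where "shortest_path V E u v p"
proof -
  let ?P = "\<lambda>k. \<exists>ys. gwalk V E ys \<and> hd ys = u \<and> last ys = v \<and> length ys = k + 1"
  have "?P (length xs - 1)" using assms by (intro exI[of _ xs]) (auto simp: gwalk_def)
  then have "?P (gdist V E u v)" unfolding gdist_def by (rule LeastI)
  then show ?thesis using that unfolding shortest_path_def by blast
qed

lemma shortest_path_two_step:
  assumes "gwalk V E [u, v, w]" "u \<noteq> w" "\<not> E u w"
  shows "shortest_path V E u w [u, v, w]"
proof -
  obtain p where p: "shortest_path V E u w p" using shortest_path_exists[OF assms(1)] by auto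
  then have walk: "gwalk V E p" "hd p = u" "last p = w"
    and len: "length p = gdist V E u w + 1"
    by (auto simp: shortest_path_def)
  have "length p \<le> 3" using shortest_path_length_le[OF p assms(1)] by simp
  moreover have "length p \<ge> 3"
    using walk assms(2,3) by (cases p; cases "tl p"; cases "tl (tl p)") auto
  ultimately show ?thesis using assms(1) len by (simp add: shortest_path_def)
qed

definition diameter_le :: "'v set \<Rightarrow> ('v \<Rightarrow> 'v \<Rightarrow> bool) \<Rightarrow> nat \<Rightarrow> bool" where
  "diameter_le V E k \<longleftrightarrow>
     (\<forall>u\<in>V. \<forall>v\<in>V. \<exists>xs. gwalk V E xs \<and> hd xs = u \<and> last xs = v \<and> length xs \<le> k + 1)"

lemma shortest_path_interior_diameter_le_2:
  assumes "diameter_le V E 2" "shortest_path V E u w p" "v \<in> set p" "v \<noteq> u" "v \<noteq> w"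
  shows "E u v \<and> E v w \<and> \<not> E u w"
proof -
  have walk: "gwalk V E p" "hd p = u" "last p = w"
    using assms(2) by (auto simp: shortest_path_def)
  then have "u \<in> V" "w \<in> V" using gwalk_hd_last_in by blast+
  then obtain xs where "gwalk V E xs" "hd xs = u" "last xs = w" "length xs \<le> 2 + 1"
    using assms(1) unfolding diameter_le_def by blast
  then have len: "length p \<le> 3" using shortest_path_length_le[OF assms(2)] by fastforce
  obtain ys zs where p: "p = ys @ v # zs" using split_list[OF assms(3)] by blast
  have "ys \<noteq> []" "zs \<noteq> []" using walk assms(4,5) p by auto
  with len p walk have p_eq: "p = [u, v, w]"
    by (cases ys; cases zs) auto
  have "\<not> E u w"
  proof
    assume "E u w"
    then have "length p \<le> length [u, w]"
      using \<open>u \<in> V\<close> \<open>w \<in> V\<close> by (intro shortest_path_length_le[OF assms(2)]) auto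
    then show False using p_eq by simp
  qed
  then show ?thesis using walk(1) p_eq by simp
qed

lemma strongly_resolves_commute:
  "strongly_resolves V E w u v \<longleftrightarrow> strongly_resolves V E w v u"
  unfolding strongly_resolves_def by blast

lemma strongly_resolves_endpoint:
  assumes "gwalk V E xs" "hd xs = u" "last xs = v"
  shows "strongly_resolves V E v u v"
proof -
  obtain p where p: "shortest_path V E u v p" using shortest_path_exists[OF assms] .
  then have "v \<in> set p" unfolding shortest_path_def gwalk_def by (metis last_in_set)
  with p show ?thesis unfolding strongly_resolves_def by blast
qed

lemma strongly_resolves_diameter_le_2:
  assumes "diameter_le V E 2" "strongly_resolves V E w x y" "w \<noteq> x" "w \<noteq> y" "x \<noteq> y"
  shows "(E x y \<and> E y w \<and> \<not> E x w) \<or> (E y x \<and> E x w \<and> \<not> E y w)"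
  using assms shortest_path_interior_diameter_le_2[OF assms(1)]
  unfolding strongly_resolves_def by metis

lemma sdim_eqI:
  assumes "strong_resolving_set V E W" "finite W"
    and "\<And>W'. strong_resolving_set V E W' \<Longrightarrow> finite W' \<Longrightarrow> card W \<le> card W'"
  shows "sdim V E = card W"
  unfolding sdim_def using assms by (intro cInf_eq_minimum) auto

lemma card_intersecting_family:
  assumes "finite X" "A \<subseteq> Pow X" "\<And>S T. S \<in> A \<Longrightarrow> T \<in> A \<Longrightarrow> S \<inter> T \<noteq> {}"
  shows "2 * card A \<le> 2 ^ card X"
proof -
  let ?C = "(\<lambda>S. X - S) ` A"
  have "inj_on (\<lambda>S. X - S) A"
    using assms(2) by (intro inj_onI) (metis Diff_Diff_Int Int_absorb1 PowD subsetD)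
  then have "card ?C = card A" by (rule card_image)
  moreover have "A \<inter> ?C = {}" using assms(3) by blast
  moreover have "finite A" using assms(1,2) finite_subset by blast
  moreover have "card (A \<union> ?C) \<le> card (Pow X)"
    using assms(1,2) by (intro card_mono) auto
  ultimately show ?thesis using assms(1) by (simp add: card_Un_disjoint card_Pow)
qed

lemma card_subsets_containing:
  assumes "finite X" "x \<in> X"
  shows "card {S. S \<subseteq> X \<and> x \<in> S} = 2 ^ (card X - 1)"
proof -
  have "{S. S \<subseteq> X \<and> x \<in> S} = insert x ` Pow (X - {x})"
    using assms(2) by (auto intro!: image_eqI[of _ _ "_ - {x}"])
  moreover have "inj_on (insert x) (Pow (X - {x}))"
    by (rule inj_onI) (metis Diff_insert_absorb PowD subset_Diff_insert)
  ultimately show ?thesis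
    using assms by (simp add: card_image card_Pow)
qed

lemma skeleton_indicator [simp]: "skeleton (indicator S :: nat \<Rightarrow> 'a::zero_neq_one) = S"
  by (auto simp: skeleton_def indicator_eq_0_iff)

lemma inj_indicator: "inj (indicator :: nat set \<Rightarrow> nat \<Rightarrow> 'a::zero_neq_one)"
  by (metis injI skeleton_indicator)

lemma indicator_eq_indicator_iff [simp]:
  "(indicator S :: nat \<Rightarrow> 'a::zero_neq_one) = indicator T \<longleftrightarrow> S = T"
  using inj_indicator by (auto dest: injD)

lemma indicator_in_IG_vertices:
  assumes "S \<noteq> {}" "S \<subseteq> {..<n}"
  shows "(indicator S :: nat \<Rightarrow> 'a::zero_neq_one) \<in> IG_vertices n"
proof -
  have "(indicator S :: nat \<Rightarrow> 'a) \<noteq> (\<lambda>_. 0)"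
    using assms(1) by (auto simp: fun_eq_iff indicator_eq_0_iff)
  moreover have "(indicator S :: nat \<Rightarrow> 'a) \<in> coord_space n"
    using assms(2) by (auto simp: coord_space_def indicator_eq_0_iff)
  ultimately show ?thesis by (auto simp: IG_vertices_def)
qed

lemma IG_vertex_skeleton:
  assumes "a \<in> IG_vertices n"
  shows "skeleton a \<noteq> {}" "skeleton a \<subseteq> {..<n}"
  using assms unfolding IG_vertices_def coord_space_def skeleton_def
  by (auto simp: fun_eq_iff, meson not_le)

lemma finite_IG_vertices: "finite (IG_vertices n :: (nat \<Rightarrow> 'a::{zero,finite}) set)"
proof -
  have "finite {a :: nat \<Rightarrow> 'a. \<forall>i. (i \<in> {..<n} \<longrightarrow> a i \<in> UNIV) \<and> (i \<notin> {..<n} \<longrightarrow> a i = 0)}"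
    by (rule finite_set_of_finite_funs) auto
  moreover have "coord_space n = {a :: nat \<Rightarrow> 'a. \<forall>i. (i \<in> {..<n} \<longrightarrow> a i \<in> UNIV) \<and> (i \<notin> {..<n} \<longrightarrow> a i = 0)}"
    by (auto simp: coord_space_def)
  ultimately show ?thesis by (simp add: IG_vertices_def)
qed

lemma IG_diameter_le_2: "diameter_le (IG_vertices n :: (nat \<Rightarrow> 'a::zero_neq_one) set) IG_adj 2"
  unfolding diameter_le_def
proof (intro ballI)
  fix a b :: "nat \<Rightarrow> 'a" assume a: "a \<in> IG_vertices n" and b: "b \<in> IG_vertices n"
  let ?walk = "\<lambda>xs. gwalk (IG_vertices n) IG_adj xs \<and> hd xs = a \<and> last xs = b \<and> length xs \<le> 2 + 1"
  consider "a = b" | "IG_adj a b" | "a \<noteq> b" "skeleton a \<inter> skeleton b = {}"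
    unfolding IG_adj_def by blast
  then show "\<exists>xs. ?walk xs"
  proof cases
    case 1
    then show ?thesis using a by (intro exI[of _ "[a]"]) simp
  next
    case 2
    then show ?thesis using a b by (intro exI[of _ "[a, b]"]) simp
  next
    case 3
    let ?one = "indicator {..<n} :: nat \<Rightarrow> 'a"
    have sk: "skeleton a \<noteq> {}" "skeleton a \<subseteq> {..<n}" "skeleton b \<noteq> {}" "skeleton b \<subseteq> {..<n}"
      using IG_vertex_skeleton a b by blast+
    then have "?one \<in> IG_vertices n" by (intro indicator_in_IG_vertices) auto
    moreover have "IG_adj a ?one" "IG_adj ?one b"
      using 3 sk unfolding IG_adj_def by (fastforce simp: subset_eq)+
    ultimately show ?thesis using a b by (intro exI[of _ "[a, ?one, b]"]) simp
  qed
qed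

lemma IG_strongly_resolved_pair_skeletons:
  fixes x y w :: "nat \<Rightarrow> 'a::zero_neq_one"
  assumes "strongly_resolves (IG_vertices n) IG_adj w x y" "w \<noteq> x" "w \<noteq> y" "x \<noteq> y"
  shows "skeleton x \<inter> skeleton y \<noteq> {} \<and> skeleton x \<noteq> skeleton y"
proof -
  have adj: "IG_adj x y \<and> IG_adj y w \<and> \<not> IG_adj x w \<or> IG_adj y x \<and> IG_adj x w \<and> \<not> IG_adj y w"
    by (rule strongly_resolves_diameter_le_2[OF IG_diameter_le_2 assms])
  then have "skeleton x \<inter> skeleton y \<noteq> {}"
    unfolding IG_adj_def by (metis inf_commute)
  moreover have "IG_adj x w \<longleftrightarrow> IG_adj y w" if "skeleton x = skeleton y"
    using that assms(2,3) unfolding IG_adj_def by simp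
  ultimately show ?thesis using adj by blast
qed

lemma IG_card_outside_strong_resolving_set:
  fixes W :: "(nat \<Rightarrow> 'a::zero_neq_one) set"
  assumes W: "strong_resolving_set (IG_vertices n) IG_adj W"
  shows "2 * card (IG_vertices n - W) \<le> 2 ^ n"
proof -
  let ?R = "IG_vertices n - W"
  have other: "skeleton x \<inter> skeleton y \<noteq> {} \<and> skeleton x \<noteq> skeleton y"
    if xy: "x \<in> ?R" "y \<in> ?R" "x \<noteq> y" for x y
  proof -
    obtain w where "w \<in> W" "strongly_resolves (IG_vertices n) IG_adj w x y"
      using W xy unfolding strong_resolving_set_def by blast
    then show ?thesis using xy by (intro IG_strongly_resolved_pair_skeletons[where w = w and n = n]) auto
  qed
  then have "inj_on skeleton ?R" by (intro inj_onI) blast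
  then have "card ?R = card (skeleton ` ?R)" by (simp add: card_image)
  also have "2 * \<dots> \<le> 2 ^ card {..<n}"
  proof (rule card_intersecting_family)
    show "skeleton ` ?R \<subseteq> Pow {..<n}" using IG_vertex_skeleton(2) by auto
    show "S \<inter> T \<noteq> {}" if ST: "S \<in> skeleton ` ?R" "T \<in> skeleton ` ?R" for S T
    proof -
      obtain x y where "x \<in> ?R" "y \<in> ?R" "S = skeleton x" "T = skeleton y"
        using ST by blast
      then show ?thesis using other IG_vertex_skeleton(1) by (cases "x = y") auto
    qed
  qed simp
  finally show ?thesis by simp
qed

lemma IG_card_le_strong_resolving_set:
  fixes W :: "(nat \<Rightarrow> 'a::{zero_neq_one,finite}) set"
  assumes "strong_resolving_set (IG_vertices n) IG_adj W" "n \<ge> 1"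
  shows "card (IG_vertices n :: (nat \<Rightarrow> 'a) set) - 2 ^ (n - 1) \<le> card W"
proof -
  let ?V = "IG_vertices n :: (nat \<Rightarrow> 'a) set"
  have "2 * card (?V - W) \<le> 2 ^ n"
    using assms(1) by (rule IG_card_outside_strong_resolving_set)
  also have "\<dots> = 2 * 2 ^ (n - 1)"
    using assms(2) by (cases n) auto
  finally have outside: "card (?V - W) \<le> 2 ^ (n - 1)" by simp
  have "W \<subseteq> ?V" using assms(1) by (simp add: strong_resolving_set_def)
  then have "card ?V = card (W \<union> (?V - W))" by (simp add: Un_absorb1)
  also have "\<dots> \<le> card W + card (?V - W)" by (rule card_Un_le)
  finally show ?thesis using outside by linarith
qed

definition indicators_with_0 :: "nat \<Rightarrow> (nat \<Rightarrow> 'a::zero_neq_one) set" where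
  "indicators_with_0 n = indicator ` {S. S \<subseteq> {..<n} \<and> 0 \<in> S}"

lemma indicators_with_0_subset: "indicators_with_0 n \<subseteq> IG_vertices n"
  unfolding indicators_with_0_def by (auto intro!: indicator_in_IG_vertices)

lemma card_indicators_with_0:
  assumes "n \<ge> 1"
  shows "card (indicators_with_0 n :: (nat \<Rightarrow> 'a::zero_neq_one) set) = 2 ^ (n - 1)"
  using assms card_subsets_containing[of "{..<n}" 0]
  by (simp add: indicators_with_0_def card_image inj_on_subset[OF inj_indicator])

lemma IG_strongly_resolves_indicators:
  assumes "S \<subseteq> {..<n}" "T \<subseteq> {..<n}" "S \<inter> T \<noteq> {}" "i \<in> T" "i \<notin> S"
  shows "strongly_resolves (IG_vertices n) IG_adj
           (indicator {i} :: nat \<Rightarrow> 'a::zero_neq_one) (indicator S) (indicator T)"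
proof -
  let ?u = "indicator S :: nat \<Rightarrow> 'a" and ?v = "indicator T :: nat \<Rightarrow> 'a"
    and ?w = "indicator {i} :: nat \<Rightarrow> 'a"
  have V: "?u \<in> IG_vertices n" "?v \<in> IG_vertices n" "?w \<in> IG_vertices n"
    using assms by (auto intro!: indicator_in_IG_vertices)
  have "S \<noteq> T" "T \<noteq> {i}" "S \<noteq> {i}" using assms(3-5) by auto
  then have "IG_adj ?u ?v" "IG_adj ?v ?w" "\<not> IG_adj ?u ?w" "?u \<noteq> ?w"
    using assms(3-5) unfolding IG_adj_def by auto
  then have "shortest_path (IG_vertices n) IG_adj ?u ?w [?u, ?v, ?w]"
    using V by (intro shortest_path_two_step) auto
  then show ?thesis unfolding strongly_resolves_def by auto
qed

lemma IG_strong_resolving_set: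
  "strong_resolving_set (IG_vertices n) IG_adj
     (IG_vertices n - (indicators_with_0 n :: (nat \<Rightarrow> 'a::zero_neq_one) set))"
  unfolding strong_resolving_set_def
proof (intro conjI ballI impI)
  let ?V = "IG_vertices n :: (nat \<Rightarrow> 'a) set" and ?I = "indicators_with_0 n :: (nat \<Rightarrow> 'a) set"
  have walk: "strongly_resolves ?V IG_adj v u v" if uv: "u \<in> ?V" "v \<in> ?V" for u v
  proof -
    obtain xs where "gwalk ?V IG_adj xs" "hd xs = u" "last xs = v"
      using IG_diameter_le_2 uv unfolding diameter_le_def by blast
    then show ?thesis by (rule strongly_resolves_endpoint)
  qed
  have unit: "\<exists>w \<in> ?V - ?I. strongly_resolves ?V IG_adj w (indicator S) (indicator T)"
    if "S \<subseteq> {..<n}" "0 \<in> S" "T \<subseteq> {..<n}" "0 \<in> T" "i \<in> T" "i \<notin> S" for S T i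
  proof (intro bexI)
    show "strongly_resolves ?V IG_adj (indicator {i}) (indicator S) (indicator T)"
      using that by (intro IG_strongly_resolves_indicators) auto
    have "indicator {i} \<notin> ?I"
      using that by (auto simp: indicators_with_0_def)
    then show "indicator {i} \<in> ?V - ?I"
      using that by (auto intro!: indicator_in_IG_vertices)
  qed
  fix u v assume u: "u \<in> ?V" and v: "v \<in> ?V" and "u \<noteq> v"
  show "\<exists>w \<in> ?V - ?I. strongly_resolves ?V IG_adj w u v"
  proof (cases "u \<in> ?I \<and> v \<in> ?I")
    case True
    then obtain S T where uv: "u = indicator S" "v = indicator T"
      and S: "S \<subseteq> {..<n}" "0 \<in> S" and T: "T \<subseteq> {..<n}" "0 \<in> T"
      by (auto simp: indicators_with_0_def)
    have "S \<noteq> T" using uv \<open>u \<noteq> v\<close> by blast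
    then consider i where "i \<in> T" "i \<notin> S" | i where "i \<in> S" "i \<notin> T"
      by blast
    then show ?thesis
    proof cases
      case (1 i)
      show ?thesis using unit[OF S T 1] uv by simp
    next
      case (2 i)
      have "\<exists>w \<in> ?V - ?I. strongly_resolves ?V IG_adj w v u" using unit[OF T S 2] uv by simp
      then show ?thesis by (simp only: strongly_resolves_commute[of ?V IG_adj _ v u])
    qed
  next
    case False
    then consider "u \<notin> ?I" | "v \<notin> ?I" by blast
    then show ?thesis
    proof cases
      case 1
      then show ?thesis
        using u walk[OF v u] by (simp only: strongly_resolves_commute[of ?V IG_adj u v u]) blast
    next
      case 2
      then show ?thesis using v walk[OF u v] by blast
    qed
  qed
qed auto

theorem theorem4p16:
  fixes n :: nat
  assumes "n \<ge> 3"
  shows "sdim (IG_vertices n :: (nat \<Rightarrow> 'a::{field,finite}) set) IG_adj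
           = card (IG_vertices n :: (nat \<Rightarrow> 'a) set) - 2 ^ (n - 1)"
proof -
  let ?V = "IG_vertices n :: (nat \<Rightarrow> 'a) set" and ?I = "indicators_with_0 n :: (nat \<Rightarrow> 'a) set"
  have "n \<ge> 1" using assms by simp
  have fin: "finite ?V" by (rule finite_IG_vertices)
  have sub: "?I \<subseteq> ?V" by (rule indicators_with_0_subset)
  have "card ?I = 2 ^ (n - 1)" using \<open>n \<ge> 1\<close> by (rule card_indicators_with_0)
  then have card_W: "card (?V - ?I) = card ?V - 2 ^ (n - 1)"
    using card_Diff_subset[OF finite_subset[OF sub fin] sub] by simp
  have "sdim ?V IG_adj = card (?V - ?I)"
  proof (rule sdim_eqI)
    show "strong_resolving_set ?V IG_adj (?V - ?I)" by (rule IG_strong_resolving_set)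
    show "finite (?V - ?I)" using fin by blast
    show "card (?V - ?I) \<le> card W" if "strong_resolving_set ?V IG_adj W" "finite W" for W
      using IG_card_le_strong_resolving_set[OF that(1) \<open>n \<ge> 1\<close>] card_W by simp
  qed
  then show ?thesis using card_W by simp
qed

end
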